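(* For each integer $\mu\geq 2$ there exists a large set with multiplicity LS$(3,4,10;\mu)$.
   Context: A Steiner system S$(t,k,n)$ is a pair $(Q,B)$ where $Q$ is an $n$-set and $B$ is a collection of $k$-subsets (blocks) of $Q$ such that every $t$-subset of $Q$ is contained in exactly one block. A large set with multiplicity $\mu$, LS$(t,k,n;\mu)$, is a family (the same system may occur more than once) of Steiner systems S$(t,k,n)$ on a common $n$-set $Q$ such that every $k$-subset of $Q$ is a block of exactly $\mu$ of the systems. *)

theory Defs
  imports Main
begin

definition steiner_system :: "nat \<Rightarrow> nat \<Rightarrow> nat \<Rightarrow> 'a set \<Rightarrow> 'a set set \<Rightarrow> bool" where
  "steiner_system t k n Q B \<longleftrightarrow>
     finite Q \<and> card Q = n \<and>
     (\<forall>b\<in>B. b \<subseteq> Q \<and> card b = k) \<and>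
     (\<forall>T. T \<subseteq> Q \<and> card T = t \<longrightarrow> (\<exists>!b. b \<in> B \<and> T \<subseteq> b))"

definition large_set_mult :: "nat \<Rightarrow> nat \<Rightarrow> nat \<Rightarrow> nat \<Rightarrow> 'a set \<Rightarrow> 'a set set list \<Rightarrow> bool" where
  "large_set_mult t k n \<mu> Q F \<longleftrightarrow>
     finite Q \<and> card Q = n \<and>
     (\<forall>B\<in>set F. steiner_system t k n Q B) \<and>
     (\<forall>K. K \<subseteq> Q \<and> card K = k \<longrightarrow> card {i. i < length F \<and> K \<in> F ! i} = \<mu>)"

end

theory Submission
  imports Defs "HOL-Library.Multiset"
begin

(* Relabelling the points of a Steiner system by a bijection gives again a Steiner system, and
   concatenating large sets adds their multiplicities.  Since every mu >= 2 is of the form 2a + 3b,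
   it suffices to exhibit an LS(3,4,10;2) and an LS(3,4,10;3).  Both are lists of relabellings of
   one S(3,4,10), so only that system has to be checked to be Steiner; the multiplicity condition
   is an equality of multisets of blocks, checked by sorting. *)

lemma steiner_system_image:
  assumes f: "bij_betw f Q Q'" and S: "steiner_system t k n Q B"
  shows "steiner_system t k n Q' ((`) f ` B)"
  unfolding steiner_system_def
proof (intro conjI ballI allI impI)
  have inj: "inj_on f Q" and Q': "Q' = f ` Q"
    using f by (auto simp: bij_betw_def)
  have blocks: "\<And>b. b \<in> B \<Longrightarrow> b \<subseteq> Q \<and> card b = k"
    and unique: "\<And>T. T \<subseteq> Q \<Longrightarrow> card T = t \<Longrightarrow> \<exists>!b. b \<in> B \<and> T \<subseteq> b"
    using S by (auto simp: steiner_system_def)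
  show "finite Q'" "card Q' = n"
    using S inj Q' by (auto simp: steiner_system_def card_image)
  show "b' \<subseteq> Q'" "card b' = k" if b': "b' \<in> (`) f ` B" for b'
  proof -
    obtain b where "b \<in> B" "b' = f ` b"
      using b' by blast
    then show "b' \<subseteq> Q'" "card b' = k"
      using blocks[of b] inj Q' by (auto simp: card_image inj_on_subset)
  qed
  fix T assume T: "T \<subseteq> Q' \<and> card T = t"
  then obtain T0 where T0: "T0 \<subseteq> Q" "T = f ` T0"
    using Q' by (auto simp: subset_image_iff)
  have "card T0 = t"
    using T T0 inj by (metis card_image inj_on_subset)
  then obtain b where b: "b \<in> B" "T0 \<subseteq> b"
    and b_unique: "\<And>c. c \<in> B \<Longrightarrow> T0 \<subseteq> c \<Longrightarrow> c = b"
    using unique[OF T0(1)] by blast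
  have covers: "T \<subseteq> f ` c \<longleftrightarrow> T0 \<subseteq> c" if "c \<in> B" for c
    using T0 blocks[OF that] inj by (auto simp: inj_on_image_mem_iff subset_eq)
  show "\<exists>!b'. b' \<in> (`) f ` B \<and> T \<subseteq> b'"
  proof (rule ex1I)
    show "f ` b \<in> (`) f ` B \<and> T \<subseteq> f ` b"
      using b covers by blast
    show "b' = f ` b" if "b' \<in> (`) f ` B \<and> T \<subseteq> b'" for b'
      using that covers b_unique by blast
  qed
qed

lemma large_set_mult_iff_filter:
  "large_set_mult t k n \<mu> Q F \<longleftrightarrow>
     finite Q \<and> card Q = n \<and> (\<forall>B\<in>set F. steiner_system t k n Q B) \<and>
     (\<forall>K. K \<subseteq> Q \<and> card K = k \<longrightarrow> length (filter ((\<in>) K) F) = \<mu>)"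
  by (simp add: large_set_mult_def length_filter_conv_card)

lemma large_set_mult_append:
  assumes "large_set_mult t k n \<mu> Q F" and "large_set_mult t k n \<nu> Q G"
  shows "large_set_mult t k n (\<mu> + \<nu>) Q (F @ G)"
  using assms by (auto simp: large_set_mult_iff_filter)

lemma large_set_mult_exists_if_2_3:
  assumes "large_set_mult t k n 2 Q F\<^sub>2" and "large_set_mult t k n 3 Q F\<^sub>3" and "\<mu> \<ge> 2"
  shows "\<exists>F. large_set_mult t k n \<mu> Q F"
  using \<open>\<mu> \<ge> 2\<close>
proof (induction \<mu> rule: less_induct)
  case (less \<mu>)
  consider "\<mu> = 2" | "\<mu> = 3" | "\<mu> \<ge> 4"
    using less.prems by linarith
  then show ?case
  proof cases
    case 3
    then have "\<mu> - 2 < \<mu>" "2 \<le> \<mu> - 2"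
      by auto
    then obtain F where "large_set_mult t k n (\<mu> - 2) Q F"
      using less.IH by blast
    then have "large_set_mult t k n (\<mu> - 2 + 2) Q (F @ F\<^sub>2)"
      using assms(1) by (rule large_set_mult_append)
    moreover have "\<mu> - 2 + 2 = \<mu>"
      using 3 by simp
    ultimately show ?thesis
      by metis
  qed (use assms in auto)
qed

lemma count_sum_list_mset_set:
  assumes "\<forall>B\<in>set F. finite B"
  shows "count (\<Sum>B\<leftarrow>F. mset_set B) K = length (filter ((\<in>) K) F)"
  using assms by (induction F) auto

lemma large_set_multI:
  assumes "finite Q" "card Q = n" and steiner: "\<forall>B\<in>set F. steiner_system t k n Q B"
    and blocks: "(\<Sum>B\<leftarrow>F. mset_set B) = repeat_mset \<mu> (mset_set {K. K \<subseteq> Q \<and> card K = k})"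
  shows "large_set_mult t k n \<mu> Q F"
proof -
  have finite_blocks: "finite B" if "B \<in> set F" for B
  proof (rule finite_subset)
    show "B \<subseteq> Pow Q"
      using steiner that by (auto simp: steiner_system_def)
  qed (simp add: \<open>finite Q\<close>)
  have "length (filter ((\<in>) K) F) = \<mu>" if K: "K \<subseteq> Q \<and> card K = k" for K
  proof -
    have "length (filter ((\<in>) K) F) = count (\<Sum>B\<leftarrow>F. mset_set B) K"
      using count_sum_list_mset_set finite_blocks by metis
    also have "\<dots> = \<mu>"
      using K \<open>finite Q\<close> by (simp add: blocks count_mset_set)
    finally show ?thesis .
  qed
  then show ?thesis
    using assms by (simp add: large_set_mult_iff_filter)
qed

(* Equal to a filter over subseqs (combs_eq_filter_subseqs), but much faster to evaluate by
   simplification. *)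
fun combs :: "nat \<Rightarrow> 'a list \<Rightarrow> 'a list list" where
  "combs 0 xs = [[]]"
| "combs (Suc k) [] = []"
| "combs (Suc k) (x # xs) = map ((#) x) (combs k xs) @ combs (Suc k) xs"

lemma filter_Nil_subseqs: "filter (\<lambda>ys. ys = []) (subseqs xs) = [[]]"
  by (induction xs) (simp_all add: Let_def filter_map o_def)

lemma combs_eq_filter_subseqs: "combs k xs = filter (\<lambda>ys. length ys = k) (subseqs xs)"
  by (induction k xs rule: combs.induct)
     (simp_all add: filter_Nil_subseqs Let_def filter_map o_def)

lemma set_map_set_combs:
  assumes "distinct xs"
  shows "set (map set (combs k xs)) = {K. K \<subseteq> set xs \<and> card K = k}"
proof -
  have card_set: "card (set ys) = length ys" if "ys \<in> set (subseqs xs)" for ys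
    using subseqs_distinctD[OF that assms] by (rule distinct_card)
  have "set (map set (combs k xs)) = set ` {ys \<in> set (subseqs xs). length ys = k}"
    by (simp add: combs_eq_filter_subseqs)
  also have "\<dots> = {K \<in> set ` set (subseqs xs). card K = k}"
    using card_set by auto
  also have "\<dots> = {K. K \<subseteq> set xs \<and> card K = k}"
    by (auto simp: subseqs_powset)
  finally show ?thesis .
qed

lemma mset_set_k_subsets:
  assumes "distinct xs"
  shows "mset_set {K. K \<subseteq> set xs \<and> card K = k} = mset (map set (combs k xs))"
proof -
  have "distinct (map set (combs k xs))"
    using distinct_set_subseqs[OF assms]
    by (simp add: combs_eq_filter_subseqs distinct_map_filter)
  then show ?thesis
    using set_map_set_combs[OF assms] mset_set_set by metis
qed

fun merge :: "('a \<Rightarrow> 'a \<Rightarrow> bool) \<Rightarrow> 'a list \<Rightarrow> 'a list \<Rightarrow> 'a list" where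
  "merge le [] ys = ys"
| "merge le xs [] = xs"
| "merge le (x # xs) (y # ys) =
     (if le x y then x # merge le xs (y # ys) else y # merge le (x # xs) ys)"

fun halve :: "'a list \<Rightarrow> 'a list \<times> 'a list" where
  "halve [] = ([], [])"
| "halve [x] = ([x], [])"
| "halve (x # y # zs) = (case halve zs of (as, bs) \<Rightarrow> (x # as, y # bs))"

lemma length_halve_le:
  "halve xs = (as, bs) \<Longrightarrow> length as \<le> length xs \<and> length bs \<le> length xs"
  by (induction xs arbitrary: as bs rule: halve.induct) (auto split: prod.splits)

function msort :: "('a \<Rightarrow> 'a \<Rightarrow> bool) \<Rightarrow> 'a list \<Rightarrow> 'a list" where
  "msort le [] = []"
| "msort le [x] = [x]"
| "msort le (x # y # zs) =
     (case halve (x # y # zs) of (as, bs) \<Rightarrow> merge le (msort le as) (msort le bs))"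
  by pat_completeness auto
termination
  by (relation "measure (length \<circ> snd)") (auto split: prod.splits dest!: length_halve_le)

lemma mset_merge: "mset (merge le xs ys) = mset xs + mset ys"
  by (induction le xs ys rule: merge.induct) auto

lemma mset_halve: "mset (fst (halve xs)) + mset (snd (halve xs)) = mset xs"
  by (induction xs rule: halve.induct) (auto split: prod.splits)

lemma mset_msort: "mset (msort le xs) = mset xs"
proof (induction le xs rule: msort.induct)
  case (3 le x y zs)
  obtain as bs where halve: "halve (x # y # zs) = (as, bs)"
    by fastforce
  then have "mset as + mset bs = mset (x # y # zs)"
    using mset_halve[of "x # y # zs"] by simp
  then show ?case
    using 3 halve by (simp add: mset_merge)
qed auto

lemma mset_eq_if_msort_eq:
  assumes "msort le (map sorted_list_of_set Xs) = ys" and "\<forall>X\<in>set Xs. finite X"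
  shows "mset Xs = image_mset set (mset ys)"
proof -
  have "image_mset set (mset ys) = mset (map (set \<circ> sorted_list_of_set) Xs)"
    using assms(1) mset_msort by (metis mset_map map_map)
  also have "\<dots> = mset Xs"
    using assms(2) by (simp add: map_idI)
  finally show ?thesis ..
qed

lemma image_mset_set_concat_replicate:
  "image_mset set (mset (concat (map (replicate \<mu>) xs))) = repeat_mset \<mu> (mset (map set xs))"
  by (induction xs) auto

lemma ex1_if_length_filter_eq_1:
  assumes "length (filter P xs) = 1"
  shows "\<exists>!x. x \<in> set xs \<and> P x"
proof -
  obtain x where "filter P xs = [x]"
    using assms by (auto simp: length_Suc_conv)
  then have "{y \<in> set xs. P y} = {x}"
    by (metis set_filter empty_set list.simps(15))
  then show ?thesis
    by (intro ex1I[of _ x]) (auto simp: set_eq_iff)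
qed

lemma steiner_system_setI:
  assumes "finite Q" "card Q = n" "\<forall>B\<in>set bs. B \<subseteq> Q \<and> card B = k"
    and "\<forall>T. T \<subseteq> Q \<and> card T = t \<longrightarrow> length (filter ((\<subseteq>) T) bs) = 1"
  shows "steiner_system t k n Q (set bs)"
proof -
  have "\<exists>!B. B \<in> set bs \<and> T \<subseteq> B" if "T \<subseteq> Q \<and> card T = t" for T
    using assms(4) that by (intro ex1_if_length_filter_eq_1) simp
  then show ?thesis
    using assms(1-3) by (simp add: steiner_system_def)
qed

lemma bij_betw_nth_permutation:
  assumes "distinct p" and "set p = {0..<n}"
  shows "bij_betw ((!) p) {0..<n} {0..<n}"
proof (rule bij_betw_nth)
  have "length p = n"
    using assms distinct_card[of p] by simp
  then show "{0..<n} = {..<length p}"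
    by auto
qed (use assms in auto)

definition relabellings :: "nat set list \<Rightarrow> 'a list list \<Rightarrow> 'a set set list" where
  "relabellings bs ps = map (\<lambda>p. (`) ((!) p) ` set bs) ps"

(* The comparison
   lexordp_eq is chosen because combs k [0..<n] lists the k-subsets in lexicographic order, which
   makes the hypothesis decidable by evaluation. *)
lemma large_set_mult_relabellings:
  assumes steiner: "steiner_system t k n {0..<n} (set bs)" and "distinct bs"
    and perms: "\<forall>p\<in>set ps. distinct p \<and> set p = {0..<n}"
    and sorted: "msort lexordp_eq (map sorted_list_of_set (concat (map (\<lambda>p. map ((`) ((!) p)) bs) ps)))
                   = concat (map (replicate \<mu>) (combs k [0..<n]))"
  shows "large_set_mult t k n \<mu> {0..<n} (relabellings bs ps)"
  unfolding relabellings_def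
proof (rule large_set_multI)
  have bij: "bij_betw ((!) p) {0..<n} {0..<n}" if "p \<in> set ps" for p
    using perms that by (simp add: bij_betw_nth_permutation)
  then show "\<forall>B\<in>set (map (\<lambda>p. (`) ((!) p) ` set bs) ps). steiner_system t k n {0..<n} B"
    using steiner_system_image[OF bij steiner] by auto
  have blocks: "set bs \<subseteq> Pow {0..<n}"
    using steiner by (auto simp: steiner_system_def)
  have "mset_set ((`) ((!) p) ` set bs) = mset (map ((`) ((!) p)) bs)" if "p \<in> set ps" for p
  proof -
    have "inj_on ((`) ((!) p)) (set bs)"
      using bij[OF that] blocks inj_on_image_Pow inj_on_subset by (metis bij_betw_def)
    then have "distinct (map ((`) ((!) p)) bs)"
      using \<open>distinct bs\<close> by (simp add: distinct_map)
    then show ?thesis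
      by (metis mset_set_set set_map)
  qed
  then have "(\<Sum>B\<leftarrow>map (\<lambda>p. (`) ((!) p) ` set bs) ps. mset_set B)
             = mset (concat (map (\<lambda>p. map ((`) ((!) p)) bs) ps))"
    by (simp add: mset_concat o_def cong: map_cong)
  also have "\<dots> = image_mset set (mset (concat (map (replicate \<mu>) (combs k [0..<n]))))"
    using blocks by (intro mset_eq_if_msort_eq[OF sorted]) (auto intro: finite_subset)
  also have "\<dots> = repeat_mset \<mu> (mset_set {K. K \<subseteq> {0..<n} \<and> card K = k})"
    using mset_set_k_subsets[of "[0..<n]" k] by (simp add: image_mset_set_concat_replicate)
  finally show "(\<Sum>B\<leftarrow>map (\<lambda>p. (`) ((!) p) ` set bs) ps. mset_set B)
                = repeat_mset \<mu> (mset_set {K. K \<subseteq> {0..<n} \<and> card K = k})" .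
qed auto

(* Found by computer search.  The base system is, up to isomorphism, the only S(3,4,10); perms_2
   contains one permutation twice, so that system occurs twice in the large set. *)
definition base_system :: "nat set list" where
  "base_system =
    [{0,1,2,3}, {0,1,4,9}, {0,1,5,6}, {0,1,7,8}, {0,2,4,8}, {0,2,5,7},
     {0,2,6,9}, {0,3,4,5}, {0,3,6,8}, {0,3,7,9}, {0,4,6,7}, {0,5,8,9},
     {1,2,4,6}, {1,2,5,8}, {1,2,7,9}, {1,3,4,8}, {1,3,5,9}, {1,3,6,7},
     {1,4,5,7}, {1,6,8,9}, {2,3,4,7}, {2,3,5,6}, {2,3,8,9}, {2,4,5,9},
     {2,6,7,8}, {3,4,6,9}, {3,5,7,8}, {4,5,6,8}, {4,7,8,9}, {5,6,7,9}]"

definition perms_2 :: "nat list list" where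
  "perms_2 =
    [[0,1,2,3,4,5,6,7,8,9], [0,1,2,3,4,9,8,5,6,7], [0,1,2,9,6,4,8,5,7,3], [0,1,2,9,6,4,8,5,7,3],
     [0,1,2,7,5,6,4,3,9,8], [0,1,2,6,8,4,5,7,9,3], [0,1,2,5,3,6,4,8,7,9], [0,1,2,7,5,9,4,6,8,3],
     [0,1,2,5,4,7,6,8,9,3], [0,1,2,4,3,8,6,9,7,5], [0,1,2,8,3,5,4,6,9,7], [0,1,2,6,5,4,7,3,8,9],
     [0,1,2,8,4,5,9,7,6,3], [0,1,2,4,3,6,9,8,5,7]]"

definition perms_3 :: "nat list list" where
  "perms_3 =
    [[0,1,2,3,4,9,8,6,7,5], [0,1,2,7,4,9,3,5,8,6], [0,1,2,5,7,4,3,8,9,6], [0,1,2,7,5,3,4,8,6,9],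
     [0,1,2,8,3,5,7,9,4,6], [0,1,2,4,6,3,7,9,8,5], [0,1,2,6,3,4,5,9,7,8], [0,1,2,3,5,7,8,4,6,9],
     [0,1,2,5,3,8,4,9,7,6], [0,1,2,4,6,5,3,7,8,9], [0,1,2,9,3,6,5,7,4,8], [0,1,2,6,4,5,8,3,7,9],
     [0,1,2,3,5,4,9,8,7,6], [0,1,2,6,4,9,3,7,5,8], [0,1,2,4,3,7,9,8,6,5], [0,1,2,8,3,9,5,6,7,4],
     [0,1,2,7,6,3,9,5,8,4], [0,1,2,5,3,4,7,6,9,8], [0,1,2,9,6,5,3,4,7,8], [0,1,2,8,3,6,9,5,4,7],
     [0,1,2,9,4,5,7,3,6,8]]"

lemma steiner_system_base_system: "steiner_system 3 4 10 {0..<10} (set base_system)"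
proof (rule steiner_system_setI)
  have check: "\<forall>T\<in>set (map set (combs 3 [0..<10])). length (filter ((\<subseteq>) T) base_system) = 1"
    by code_simp
  show "\<forall>T. T \<subseteq> {0..<10} \<and> card T = 3 \<longrightarrow> length (filter ((\<subseteq>) T) base_system) = 1"
  proof (intro allI impI)
    fix T :: "nat set"
    assume "T \<subseteq> {0..<10} \<and> card T = 3"
    then have "T \<in> set (map set (combs 3 [0..<10]))"
      using set_map_set_combs[of "[0..<10::nat]" 3] by simp
    with check show "length (filter ((\<subseteq>) T) base_system) = 1"
      by blast
  qed
qed (simp | code_simp)+

lemma distinct_base_system: "distinct base_system"
  by code_simp

lemma large_set_mult_2:
  "large_set_mult 3 4 10 2 {0..<10} (relabellings base_system perms_2)"
  by (rule large_set_mult_relabellings[OF steiner_system_base_system distinct_base_system])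
     code_simp+

lemma large_set_mult_3:
  "large_set_mult 3 4 10 3 {0..<10} (relabellings base_system perms_3)"
  by (rule large_set_mult_relabellings[OF steiner_system_base_system distinct_base_system])
     code_simp+

theorem theorem16:
  fixes \<mu> :: nat
  assumes "\<mu> \<ge> 2"
  shows "\<exists>F :: nat set set list. large_set_mult 3 4 10 \<mu> {0..<10} F"
  using large_set_mult_exists_if_2_3[OF large_set_mult_2 large_set_mult_3 assms] .

end
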